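(* Let $q>2$ be a prime power, $h\geq 2$, and let $\mathcal{L}_1,\mathcal{L}_2,\mathcal{L}_3$ be pairwise disjoint blocking sets of $\mathrm{PG}(2,q^h)$, each projectively equivalent to $\{(x:\mathrm{Tr}_{q^h/q}(x):y): x\in\mathbb{F}_{q^h},\ y\in\mathbb{F}_q,\ (x,y)\neq(0,0)\}$. Then $\mathcal{L}_1\cup\mathcal{L}_2\cup\mathcal{L}_3$ is a minimal $3$-fold blocking set.
   Context: $\mathrm{Tr}_{q^h/q}(x)=x+x^q+\dots+x^{q^{h-1}}$. A $t$-fold blocking set is a point set meeting every line in at least $t$ points; it is minimal if it contains no smaller $t$-fold blocking set (equivalently, each of its points lies on a line meeting it in exactly $t$ points). *)

theory Defs
  imports "HOL-Analysis.Analysis"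
begin

definition proj_pt :: "'a::field ^ 3 \<Rightarrow> ('a ^ 3) set" where
  "proj_pt v = {c *s v | c. c \<noteq> 0}"

definition PG2_points :: "('a::field ^ 3) set set" where
  "PG2_points = {proj_pt v | v. v \<noteq> 0}"

definition PG2_line :: "'a::field ^ 3 \<Rightarrow> ('a ^ 3) set set" where
  "PG2_line u = {proj_pt v | v. v \<noteq> 0 \<and> (\<Sum>i\<in>UNIV. u $ i * v $ i) = 0}"

definition PG2_lines :: "('a::field ^ 3) set set set" where
  "PG2_lines = {PG2_line u | u. u \<noteq> 0}"

definition t_fold_blocking :: "nat \<Rightarrow> ('a::field ^ 3) set set \<Rightarrow> bool" where
  "t_fold_blocking t B \<longleftrightarrow> B \<subseteq> PG2_points \<and>
     (\<forall>L\<in>PG2_lines. card (B \<inter> L) \<ge> t)"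

definition blocking_set :: "('a::field ^ 3) set set \<Rightarrow> bool" where
  "blocking_set B \<longleftrightarrow> t_fold_blocking 1 B"

definition minimal_t_fold_blocking :: "nat \<Rightarrow> ('a::field ^ 3) set set \<Rightarrow> bool" where
  "minimal_t_fold_blocking t B \<longleftrightarrow> t_fold_blocking t B \<and>
     (\<forall>B'. B' \<subset> B \<longrightarrow> \<not> t_fold_blocking t B')"

definition proj_image :: "'a::field ^ 3 ^ 3 \<Rightarrow> ('a ^ 3) set set \<Rightarrow> ('a ^ 3) set set" where
  "proj_image M S = {proj_pt (M *v v) | v. v \<noteq> 0 \<and> proj_pt v \<in> S}"

definition proj_equivalent :: "('a::field ^ 3) set set \<Rightarrow> ('a ^ 3) set set \<Rightarrow> bool" where
  "proj_equivalent A B \<longleftrightarrow> (\<exists>M :: 'a ^ 3 ^ 3. invertible M \<and> B = proj_image M A)"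

definition trace_rel :: "nat \<Rightarrow> nat \<Rightarrow> 'a::field \<Rightarrow> 'a" where
  "trace_rel q h x = (\<Sum>i<h. x ^ (q ^ i))"

text \<open>The subfield F_q of a field of order q^h.\<close>

definition subfield_q :: "nat \<Rightarrow> 'a::field set" where
  "subfield_q q = {y. y ^ q = y}"

definition trace_set :: "nat \<Rightarrow> nat \<Rightarrow> ('a::field ^ 3) set set" where
  "trace_set q h = {proj_pt (vector [x, trace_rel q h x, y]) | x y.
      y \<in> subfield_q q \<and> (x, y) \<noteq> (0, 0)}"

definition prime_power :: "nat \<Rightarrow> bool" where
  "prime_power q \<longleftrightarrow> (\<exists>p k. prime p \<and> k > 0 \<and> q = p ^ k)"

end

theory Submission
  imports Defs "HOL-Number_Theory.Residues" "HOL-Algebra.Algebraic_Closure_Type"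
begin

text \<open>The representative vectors \<open>(x, Tr x, y)\<close>, \<open>y \<in> \<bbbF>\<^sub>q\<close>, of the trace set form an
  additive group, and so do their images under a projectivity. Hence if \<open>\<langle>a\<rangle>, \<langle>b\<rangle>\<close> are
  two points of some \<open>L\<^sub>i\<close> on a line, \<open>\<langle>a + b\<rangle>\<close> is a third one: no line meets \<open>L\<^sub>i\<close> in
  exactly two points. Since \<open>Tr\<close> takes values in \<open>\<bbbF>\<^sub>q\<close> and \<open>Tr x = 1\<close> has at most
  \<open>q\<^bsup>h-1\<^esup>\<close> solutions, \<open>|L\<^sub>i| \<le> q\<^sup>h + q\<^bsup>h-1\<^esup> + 1\<close>.

  Let \<open>P \<in> L\<^sub>1\<close>. The \<open>q\<^sup>h + 1\<close> lines through \<open>P\<close> partition the remaining points; each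
  carries no or at least two further points of \<open>L\<^sub>1\<close>, and one or at least three points of
  \<open>L\<^sub>2\<close> and of \<open>L\<^sub>3\<close>. If each of them met \<open>L\<^sub>1 \<union> L\<^sub>2 \<union> L\<^sub>3\<close> in four or more points,
  then \<open>|L\<^sub>1| - 1 + |L\<^sub>2| + |L\<^sub>3| \<ge> 4(q\<^sup>h + 1)\<close>, contradicting the size bound as
  \<open>q \<ge> 3\<close>. So every point of the union lies on a line meeting it in exactly three points,
  which makes the 3-fold blocking set minimal.\<close>

section \<open>Finite fields and the relative trace\<close>

text \<open>The library proves this only for the sort \<open>finite_field\<close>; here it is derived from
  Lagrange's theorem for the unit group of the type viewed as an HOL-Algebra ring.\<close>

lemma power_card_eq_self:
  fixes x :: "'a::{finite,field}"
  shows "x ^ CARD('a) = x"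
proof (cases "x = 0")
  case False
  let ?R = "ring_of_type_algebra :: 'a ring"
  interpret cring ?R by (rule cring_from_type_algebra)
  have units: "Units ?R = UNIV - {0}"
    by (auto simp: Units_def ring_of_type_algebra_def) (metis left_inverse right_inverse)
  have pow: "y [^]\<^bsub>?R\<^esub> n = y ^ n" for y :: 'a and n :: nat
    by (induction n) (simp_all add: ring_of_type_algebra_def mult.commute)
  have one: "\<one>\<^bsub>?R\<^esub> = 1" by (simp add: ring_of_type_algebra_def)
  have "x [^]\<^bsub>?R\<^esub> card (Units ?R) = \<one>\<^bsub>?R\<^esub>"
    by (rule units_power_order_eq_one) (simp_all add: units False)
  then have "x ^ (CARD('a) - 1) = 1" by (simp add: units pow one card_Diff_singleton)
  then have "x * x ^ (CARD('a) - 1) = x" by simp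
  then show ?thesis by (simp flip: power_Suc)
qed simp

lemma CHAR_power_eq_prime_power:
  fixes q h :: nat
  assumes "prime_power q" and "CARD('a::{finite,field}) = q ^ h"
  obtains k where "q = CHAR('a) ^ k"
proof -
  obtain p k where pk: "Factorial_Ring.prime p" "q = p ^ k"
    using assms(1) unfolding prime_power_def by blast
  have char_prime: "Factorial_Ring.prime CHAR('a)"
    by (simp add: finite_imp_CHAR_pos prime_CHAR_semidom)
  have "CHAR('a) dvd p ^ (k * h)"
    using CHAR_dvd_CARD[where ?'a = 'a] assms(2) pk(2) by (simp add: power_mult)
  then have "CHAR('a) = p"
    using char_prime pk(1) prime_dvd_power primes_dvd_imp_eq by blast
  then show thesis using pk(2) that by blast
qed

lemma freshmans_dream_prime_power:
  fixes x y :: "'a::{finite,field}"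
  assumes "prime_power q" and "CARD('a) = q ^ h"
  shows "(x + y) ^ (q ^ i) = x ^ (q ^ i) + y ^ (q ^ i)"
proof -
  obtain k where "q = CHAR('a) ^ k" using CHAR_power_eq_prime_power assms .
  then show ?thesis
    by (intro freshmans_dream'[where n = "k * i"])
       (simp_all add: finite_imp_CHAR_pos prime_CHAR_semidom power_mult)
qed

lemma prime_power_gt_1: "prime_power q \<Longrightarrow> q > 1"
  unfolding prime_power_def using prime_gt_1_nat one_less_power by blast

lemma subfield_q_add:
  fixes x y :: "'a::{finite,field}"
  assumes "prime_power q" and "CARD('a) = q ^ h" and "x \<in> subfield_q q" and "y \<in> subfield_q q"
  shows "x + y \<in> subfield_q q"
  using assms freshmans_dream_prime_power[OF assms(1,2), of x y 1] by (simp add: subfield_q_def)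

lemma subfield_q_power_q_power: "c \<in> subfield_q q \<Longrightarrow> c ^ (q ^ i) = c"
  by (induction i) (simp_all add: subfield_q_def power_mult)

lemma trace_rel_0: "q > 0 \<Longrightarrow> trace_rel q h 0 = 0"
  by (auto simp: trace_rel_def intro!: sum.neutral)

lemma trace_rel_add:
  fixes x y :: "'a::{finite,field}"
  assumes "prime_power q" and "CARD('a) = q ^ h"
  shows "trace_rel q h (x + y) = trace_rel q h x + trace_rel q h y"
  by (simp add: trace_rel_def freshmans_dream_prime_power[OF assms] sum.distrib)

lemma trace_rel_mult_subfield:
  "c \<in> subfield_q q \<Longrightarrow> trace_rel q h (c * x) = c * trace_rel q h x"
  by (simp add: trace_rel_def power_mult_distrib subfield_q_power_q_power sum_distrib_left)

lemma trace_rel_divide_subfield: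
  "c \<in> subfield_q q \<Longrightarrow> trace_rel q h (x / c) = trace_rel q h x / c"
  using trace_rel_mult_subfield[of "1 / c" q h x] by (simp add: subfield_q_def power_one_over)

lemma trace_rel_in_subfield:
  fixes x :: "'a::{finite,field}"
  assumes "prime_power q" and "CARD('a) = q ^ h"
  shows "trace_rel q h x \<in> subfield_q q"
proof -
  obtain k where k: "q = CHAR('a) ^ k" using CHAR_power_eq_prime_power assms .
  have "trace_rel q h x ^ q = (\<Sum>i<h. (x ^ (q ^ i)) ^ q)"
    unfolding trace_rel_def
    by (rule freshmans_dream_sum'[OF _ k]) (simp add: finite_imp_CHAR_pos prime_CHAR_semidom)
  also have "\<dots> = (\<Sum>i<h. x ^ (q ^ Suc i))"
    by (intro sum.cong refl) (metis power_Suc2 power_mult)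
  also have "\<dots> = (\<Sum>i<Suc h. x ^ (q ^ i)) - x"
    by (subst sum.lessThan_Suc_shift) simp
  also have "\<dots> = trace_rel q h x"
    using power_card_eq_self[of x] assms(2) by (simp add: trace_rel_def)
  finally show ?thesis by (simp add: subfield_q_def)
qed

lemma card_trace_rel_eq_le:
  fixes c :: "'a::field"
  assumes "q > 1" and "h \<ge> 1"
  shows "card {z. trace_rel q h z = c} \<le> q ^ (h - 1)"
proof -
  define P :: "'a poly" where "P = (\<Sum>i<h. Polynomial.monom 1 (q ^ i)) - Polynomial.monom c 0"
  have poly_P: "poly P z = trace_rel q h z - c" for z
    by (simp add: P_def poly_sum poly_monom trace_rel_def)
  have "Polynomial.degree P \<le> q ^ (h - 1)"
    unfolding P_def
  proof (intro degree_diff_le degree_sum_le)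
    fix i assume "i \<in> {..<h}"
    then have "q ^ i \<le> q ^ (h - 1)" using assms(1) by (intro power_increasing) auto
    then show "Polynomial.degree (Polynomial.monom (1::'a) (q ^ i)) \<le> q ^ (h - 1)"
      using degree_monom_le[of "1::'a" "q ^ i"] by linarith
  qed (use degree_monom_le[of c 0] in auto)
  moreover have "Polynomial.coeff P (q ^ (h - 1)) = 1"
    using assms by (simp add: P_def coeff_sum coeff_monom power_inject_exp)
  then have "P \<noteq> 0" by auto
  ultimately show ?thesis
    using card_poly_roots_bound[of P] by (simp add: poly_P)
qed

section \<open>Points and lines of \<open>PG(2, K)\<close>\<close>

definition dot :: "'a::comm_semiring_0 ^ 'n \<Rightarrow> 'a ^ 'n \<Rightarrow> 'a" where
  "dot u v = (\<Sum>i\<in>UNIV. u $ i * v $ i)"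

lemma dot_add_right: "dot u (v + w) = dot u v + dot u w"
  by (simp add: dot_def distrib_left sum.distrib)

lemma dot_diff_left: "dot (u - w) v = dot u v - dot (w :: 'a::comm_ring ^ 'n) v"
  by (simp add: dot_def left_diff_distrib sum_subtractf)

lemma dot_scale_left: "dot (c *s u) v = c * dot u v"
  by (simp add: dot_def sum_distrib_left mult.assoc)

lemma dot_scale_right: "dot u (c *s v) = c * dot (u :: 'a::comm_semiring_1 ^ 'n) v"
  by (simp add: dot_def sum_distrib_left mult_ac)

lemma dot_axis_left: "dot (axis i c) v = c * v $ i"
proof -
  have "dot (axis i c) v = (\<Sum>j\<in>UNIV. if j = i then c * v $ i else 0)"
    unfolding dot_def by (intro sum.cong) (auto simp: axis_def)
  then show ?thesis by simp
qed

lemma proj_pt_self: "v \<in> proj_pt v"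
  unfolding proj_pt_def by (auto intro: exI[of _ 1])

lemma proj_pt_smult:
  assumes "c \<noteq> 0"
  shows "proj_pt (c *s v) = proj_pt v"
  unfolding proj_pt_def
proof (intro Set.set_eqI iffI)
  fix x assume "x \<in> {d *s (c *s v) |d. d \<noteq> 0}"
  then obtain d where "x = (d * c) *s v" "d \<noteq> 0" by auto
  then show "x \<in> {d *s v |d. d \<noteq> 0}" using assms by auto
next
  fix x assume "x \<in> {d *s v |d. d \<noteq> 0}"
  then obtain d where "x = (d / c) *s (c *s v)" "d \<noteq> 0" using assms by auto
  then show "x \<in> {d *s (c *s v) |d. d \<noteq> 0}" using assms by (intro CollectI exI[of _ "d / c"]) simp
qed

lemma proj_pt_eq_iff: "proj_pt v = proj_pt w \<longleftrightarrow> (\<exists>c. c \<noteq> 0 \<and> w = c *s v)"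
proof
  assume "proj_pt v = proj_pt w"
  then have "w \<in> proj_pt v" using proj_pt_self[of w] by simp
  then show "\<exists>c. c \<noteq> 0 \<and> w = c *s v" by (auto simp: proj_pt_def)
qed (auto simp: proj_pt_smult)

lemma proj_pt_in_PG2_line_iff:
  assumes "v \<noteq> 0"
  shows "proj_pt v \<in> PG2_line u \<longleftrightarrow> dot u v = 0"
proof
  assume "proj_pt v \<in> PG2_line u"
  then obtain w where "dot u w = 0" "proj_pt v = proj_pt w"
    unfolding PG2_line_def dot_def by auto
  then show "dot u v = 0"
    by (auto simp: proj_pt_eq_iff dot_scale_right)
qed (use assms in \<open>auto simp: PG2_line_def dot_def\<close>)

lemma orthogonal_pencil_basis:
  fixes p :: "'a::field ^ 3"
  assumes "p \<noteq> 0"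
  obtains f g where "dot f p = 0" and "dot g p = 0" and "g \<noteq> 0" and "\<And>s. f - s *s g \<noteq> 0"
    and "\<And>v. dot f v = 0 \<Longrightarrow> dot g v = 0 \<Longrightarrow> \<exists>c. v = c *s p"
proof -
  obtain k where k: "p $ k \<noteq> 0" using assms by (auto simp: vec_eq_iff)
  have "\<exists>i j :: 3. i \<noteq> j \<and> i \<noteq> k \<and> j \<noteq> k \<and> (\<forall>m. m = i \<or> m = j \<or> m = k)"
    using exhaust_3[of k]
  proof (elim disjE)
    assume "k = 1" then show ?thesis using exhaust_3 by (intro exI[of _ 2] exI[of _ 3]) auto
  next
    assume "k = 2" then show ?thesis using exhaust_3 by (intro exI[of _ 1] exI[of _ 3]) auto
  next
    assume "k = 3" then show ?thesis using exhaust_3 by (intro exI[of _ 1] exI[of _ 2]) auto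
  qed
  then obtain i j :: 3 where ijk: "i \<noteq> j" "i \<noteq> k" "j \<noteq> k" and all: "\<And>m. m = i \<or> m = j \<or> m = k"
    by blast
  define f where "f = p $ k *s axis i 1 - p $ i *s axis k 1"
  define g where "g = p $ k *s axis j 1 - p $ j *s axis k 1"
  have dot_f: "dot f v = p $ k * v $ i - p $ i * v $ k" for v
    by (simp add: f_def dot_diff_left dot_scale_left dot_axis_left)
  have dot_g: "dot g v = p $ k * v $ j - p $ j * v $ k" for v
    by (simp add: g_def dot_diff_left dot_scale_left dot_axis_left)
  show thesis
  proof
    show "dot f p = 0" "dot g p = 0" by (simp_all add: dot_f dot_g mult.commute)
    show "g \<noteq> 0" using k ijk by (auto simp: g_def vec_eq_iff axis_def)
    show "f - s *s g \<noteq> 0" for s using k ijk by (auto simp: f_def g_def vec_eq_iff axis_def)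
  next
    fix v assume v: "dot f v = 0" "dot g v = 0"
    define c where "c = v $ k / p $ k"
    have "v $ m = c * p $ m" for m
      using v all[of m] k by (auto simp: c_def dot_f dot_g field_simps)
    then show "\<exists>c. v = c *s p" by (auto simp: vec_eq_iff)
  qed
qed

text \<open>The lines through \<open>\<langle>p\<rangle>\<close> are indexed by a copy \<open>'a option\<close> of \<open>PG(1, K)\<close>:
  \<open>None\<close> gives \<open>\<langle>g\<rangle>\<close> and \<open>Some s\<close> gives \<open>\<langle>f - s g\<rangle>\<close>.\<close>

lemma pencil_line_coordinates:
  fixes p :: "'a::field ^ 3"
  assumes "p \<noteq> 0"
  obtains u :: "'a option \<Rightarrow> 'a ^ 3"
  where "\<And>t. u t \<noteq> 0" and "\<And>t. dot (u t) p = 0"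
    and "\<And>v. \<nexists>c. v = c *s p \<Longrightarrow> \<exists>!t. dot (u t) v = 0"
proof -
  obtain f g where fg: "dot f p = 0" "dot g p = 0" "g \<noteq> 0" "\<And>s. f - s *s g \<noteq> 0"
    and span: "\<And>v. dot f v = 0 \<Longrightarrow> dot g v = 0 \<Longrightarrow> \<exists>c. v = c *s p"
    using orthogonal_pencil_basis[OF assms] by blast
  define u where "u t = (case t of None \<Rightarrow> g | Some s \<Rightarrow> f - s *s g)" for t
  show thesis
  proof
    show "u t \<noteq> 0" "dot (u t) p = 0" for t
      using fg by (auto simp: u_def dot_diff_left dot_scale_left split: option.split)
  next
    fix v assume "\<nexists>c. v = c *s p"
    then have nz: "dot f v \<noteq> 0 \<or> dot g v \<noteq> 0" using span by blast
    define t0 where "t0 = (if dot g v = 0 then None else Some (dot f v / dot g v))"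
    have "dot (u t) v = 0 \<longleftrightarrow> t = t0" for t
    proof (cases t)
      case None
      then show ?thesis using nz by (auto simp: u_def t0_def)
    next
      case (Some s)
      then have "dot (u t) v = dot f v - s * dot g v"
        by (simp add: u_def dot_diff_left dot_scale_left)
      then show ?thesis using nz Some by (auto simp: t0_def field_simps)
    qed
    then show "\<exists>!t. dot (u t) v = 0" by simp
  qed
qed

lemma pencil_through_point:
  fixes P :: "('a::field ^ 3) set"
  assumes "P \<in> PG2_points"
  obtains l :: "'a option \<Rightarrow> ('a ^ 3) set set"
  where "\<And>t. l t \<in> PG2_lines" and "\<And>t. P \<in> l t"
    and "\<And>Q. Q \<in> PG2_points \<Longrightarrow> Q \<noteq> P \<Longrightarrow> \<exists>!t. Q \<in> l t"
proof -
  obtain p where p: "p \<noteq> 0" "P = proj_pt p" using assms unfolding PG2_points_def by blast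
  obtain u :: "'a option \<Rightarrow> 'a ^ 3" where u: "\<And>t. u t \<noteq> 0" "\<And>t. dot (u t) p = 0"
    and unique: "\<And>v. \<nexists>c. v = c *s p \<Longrightarrow> \<exists>!t. dot (u t) v = 0"
    using pencil_line_coordinates[OF p(1)] by blast
  show thesis
  proof (rule that[of "\<lambda>t. PG2_line (u t)"])
    show "PG2_line (u t) \<in> PG2_lines" for t
      using u(1) unfolding PG2_lines_def by blast
    show "P \<in> PG2_line (u t)" for t
      using u(2) p by (simp add: proj_pt_in_PG2_line_iff)
    fix Q assume "Q \<in> PG2_points" "Q \<noteq> P"
    then obtain v where v: "v \<noteq> 0" "Q = proj_pt v" "proj_pt v \<noteq> P"
      unfolding PG2_points_def by blast
    have "\<nexists>c. v = c *s p"
    proof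
      assume "\<exists>c. v = c *s p"
      then obtain c where "v = c *s p" ..
      with v(1) have "c \<noteq> 0" by auto
      with \<open>v = c *s p\<close> v(3) p(2) show False by (simp add: proj_pt_smult)
    qed
    then show "\<exists>!t. Q \<in> PG2_line (u t)"
      using unique v(1,2) by (simp add: proj_pt_in_PG2_line_iff)
  qed
qed

lemma card_Diff_singleton_eq_sum_partition:
  fixes l :: "'t::finite \<Rightarrow> 'b set"
  assumes "finite S" and "\<And>x. x \<in> S \<Longrightarrow> x \<noteq> P \<Longrightarrow> \<exists>!t. x \<in> l t"
  shows "card (S - {P}) = (\<Sum>t\<in>UNIV. card (S \<inter> l t - {P}))"
proof -
  have "S - {P} = (\<Union>t. S \<inter> l t - {P})"
  proof (intro equalityI subsetI)
    fix x assume "x \<in> S - {P}"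
    then obtain t where "x \<in> l t" using assms(2) by (metis DiffE singletonI)
    with \<open>x \<in> S - {P}\<close> show "x \<in> (\<Union>t. S \<inter> l t - {P})" by blast
  qed blast
  moreover have "(S \<inter> l s - {P}) \<inter> (S \<inter> l t - {P}) = {}" if "s \<noteq> t" for s t
    using assms(2) that by (auto simp: Ex1_def)
  ultimately show ?thesis
    using assms(1) card_UN_disjoint[of UNIV "\<lambda>t. S \<inter> l t - {P}"] by simp
qed

section \<open>Linear point sets without 2-secants\<close>

definition proj_set :: "('a::field ^ 3) set \<Rightarrow> ('a ^ 3) set set" where
  "proj_set W = {proj_pt w | w. w \<in> W \<and> w \<noteq> 0}"

definition no_2_secants :: "('a::field ^ 3) set set \<Rightarrow> bool" where
  "no_2_secants L \<longleftrightarrow> (\<forall>l\<in>PG2_lines. card (L \<inter> l) \<noteq> 2)"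

lemma proj_pt_add_distinct:
  assumes "a \<noteq> 0" and "b \<noteq> 0" and "proj_pt a \<noteq> proj_pt b"
  shows "a + b \<noteq> 0" and "proj_pt (a + b) \<noteq> proj_pt a" and "proj_pt (a + b) \<noteq> proj_pt b"
proof -
  have indep: "b \<noteq> c *s a" "a \<noteq> c *s b" for c
    using assms proj_pt_smult[of c] by (metis vector_smult_lzero)+
  show "a + b \<noteq> 0"
  proof
    assume "a + b = 0"
    then have "b = (-1) *s a" by (metis add_eq_0_iff vector_sneg_minus1)
    then show False using indep by blast
  qed
  show "proj_pt (a + b) \<noteq> proj_pt a"
  proof
    assume "proj_pt (a + b) = proj_pt a"
    then obtain c where "a + b = c *s a" using proj_pt_eq_iff[of a "a + b"] by auto
    then have "b = c *s a - 1 *s a" by (metis add_diff_cancel_left' vector_smult_lid)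
    then have "b = (c - 1) *s a" by (simp add: vector_sub_rdistrib)
    then show False using indep by blast
  qed
  show "proj_pt (a + b) \<noteq> proj_pt b"
  proof
    assume "proj_pt (a + b) = proj_pt b"
    then obtain c where "a + b = c *s b" using proj_pt_eq_iff[of b "a + b"] by auto
    then have "a = c *s b - 1 *s b" by (metis add_diff_cancel_right' vector_smult_lid)
    then have "a = (c - 1) *s b" by (simp add: vector_sub_rdistrib)
    then show False using indep by blast
  qed
qed

lemma proj_set_third_point_on_line:
  fixes W :: "('a::field ^ 3) set"
  assumes add: "\<And>a b. a \<in> W \<Longrightarrow> b \<in> W \<Longrightarrow> a + b \<in> W"
    and P: "P \<in> proj_set W \<inter> PG2_line u" and Q: "Q \<in> proj_set W \<inter> PG2_line u" and "P \<noteq> Q"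
  obtains R where "R \<in> proj_set W \<inter> PG2_line u" and "R \<noteq> P" and "R \<noteq> Q"
proof -
  obtain a where a: "a \<in> W" "a \<noteq> 0" "P = proj_pt a"
    using P by (auto simp: proj_set_def)
  with P have "dot u a = 0" by (simp add: proj_pt_in_PG2_line_iff)
  obtain b where b: "b \<in> W" "b \<noteq> 0" "Q = proj_pt b"
    using Q by (auto simp: proj_set_def)
  with Q have "dot u b = 0" by (simp add: proj_pt_in_PG2_line_iff)
  note distinct = proj_pt_add_distinct[OF a(2) b(2)] \<open>P \<noteq> Q\<close>
  have "dot u (a + b) = 0"
    using \<open>dot u a = 0\<close> \<open>dot u b = 0\<close> by (simp add: dot_add_right)
  then have "proj_pt (a + b) \<in> proj_set W \<inter> PG2_line u"
    using add[OF a(1) b(1)] distinct a(3) b(3)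
    unfolding proj_set_def by (auto simp: proj_pt_in_PG2_line_iff)
  then show thesis
    using that distinct a(3) b(3) by blast
qed

lemma no_2_secants_proj_set:
  fixes W :: "('a::{finite,field} ^ 3) set"
  assumes "\<And>a b. a \<in> W \<Longrightarrow> b \<in> W \<Longrightarrow> a + b \<in> W"
  shows "no_2_secants (proj_set W)"
  unfolding no_2_secants_def
proof (intro ballI notI)
  fix l assume "l \<in> PG2_lines" and "card (proj_set W \<inter> l) = 2"
  then obtain u where l: "l = PG2_line u" unfolding PG2_lines_def by blast
  obtain P Q where PQ: "proj_set W \<inter> l = {P, Q}" "P \<noteq> Q"
    using \<open>card (proj_set W \<inter> l) = 2\<close> by (meson card_2_iff)
  then have "P \<in> proj_set W \<inter> PG2_line u" "Q \<in> proj_set W \<inter> PG2_line u"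
    using l by auto
  then obtain R where "R \<in> proj_set W \<inter> PG2_line u" "R \<noteq> P" "R \<noteq> Q"
    using proj_set_third_point_on_line[OF assms _ _ \<open>P \<noteq> Q\<close>] by blast
  with PQ l show False by auto
qed

lemma invertible_mult_vector_eq_0_iff:
  fixes M :: "'a::field ^ 'n ^ 'n"
  assumes "invertible M"
  shows "M *v v = 0 \<longleftrightarrow> v = 0"
proof
  assume "M *v v = 0"
  obtain M' where "M' ** M = mat 1" using assms unfolding invertible_def by blast
  then have "v = M' *v (M *v v)" by (simp add: matrix_vector_mul_assoc)
  with \<open>M *v v = 0\<close> show "v = 0" by simp
qed simp

lemma proj_image_proj_set:
  fixes M :: "'a::field ^ 3 ^ 3"
  assumes "invertible M"
  shows "proj_image M (proj_set W) = proj_set ((*v) M ` W)"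
proof (intro Set.set_eqI iffI)
  fix P assume "P \<in> proj_image M (proj_set W)"
  then obtain v w where P: "P = proj_pt (M *v v)" and w: "w \<in> W" "w \<noteq> 0" "proj_pt w = proj_pt v"
    by (auto simp: proj_image_def proj_set_def)
  then obtain c where "c \<noteq> 0" "v = c *s w"
    by (auto simp: proj_pt_eq_iff)
  then have "P = proj_pt (M *v w)"
    by (simp add: P vector_scalar_commute proj_pt_smult)
  moreover have "M *v w \<noteq> 0"
    using w(2) assms by (simp add: invertible_mult_vector_eq_0_iff)
  ultimately show "P \<in> proj_set ((*v) M ` W)"
    unfolding proj_set_def using w(1) by blast
next
  fix P assume "P \<in> proj_set ((*v) M ` W)"
  then obtain w where P: "P = proj_pt (M *v w)" and w: "w \<in> W" "M *v w \<noteq> 0"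
    by (auto simp: proj_set_def)
  then have "w \<noteq> 0" by auto
  with w(1) have "proj_pt w \<in> proj_set W"
    unfolding proj_set_def by blast
  with P \<open>w \<noteq> 0\<close> show "P \<in> proj_image M (proj_set W)"
    unfolding proj_image_def by blast
qed

lemma card_proj_image_le:
  assumes "finite S"
  shows "card (proj_image M S) \<le> card S"
proof -
  have "proj_image M S \<subseteq> (\<lambda>P. proj_pt (M *v (SOME v. v \<in> P))) ` S"
  proof
    fix P assume "P \<in> proj_image M S"
    then obtain v where v: "proj_pt v \<in> S" "P = proj_pt (M *v v)"
      by (auto simp: proj_image_def)
    have "(SOME w. w \<in> proj_pt v) \<in> proj_pt v"
      using proj_pt_self by (rule someI)
    then obtain c where "c \<noteq> 0" "(SOME w. w \<in> proj_pt v) = c *s v"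
      by (auto simp: proj_pt_def)
    then have "P = proj_pt (M *v (SOME w. w \<in> proj_pt v))"
      using v(2) by (simp add: vector_scalar_commute proj_pt_smult)
    then show "P \<in> (\<lambda>P. proj_pt (M *v (SOME v. v \<in> P))) ` S"
      using v(1) by blast
  qed
  then show ?thesis
    using assms by (meson card_image_le card_mono finite_imageI order_trans)
qed

lemma trace_set_eq_proj_set:
  assumes "q > 0"
  shows "trace_set q h = proj_set {vector [x, trace_rel q h x, y] | x y. y \<in> subfield_q q}"
proof -
  have "(vector [x, trace_rel q h x, y] :: 'a ^ 3) = 0 \<longleftrightarrow> (x, y) = (0, 0)" for x y :: 'a
    using assms by (auto simp: vec_eq_iff forall_3 trace_rel_0)
  then show ?thesis
    unfolding trace_set_def proj_set_def by blast
qed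

lemma no_2_secants_proj_image_trace_set:
  fixes M :: "'a::{finite,field} ^ 3 ^ 3"
  assumes "prime_power q" and "CARD('a) = q ^ h" and "invertible M"
  shows "no_2_secants (proj_image M (trace_set q h))"
proof -
  define W :: "('a ^ 3) set" where "W = {vector [x, trace_rel q h x, y] | x y. y \<in> subfield_q q}"
  have "a + b \<in> W" if "a \<in> W" "b \<in> W" for a b
    using that subfield_q_add[OF assms(1,2)]
    by (auto simp: W_def vec_eq_iff forall_3 trace_rel_add[OF assms(1,2)])
  then have "a + b \<in> (*v) M ` W" if "a \<in> (*v) M ` W" "b \<in> (*v) M ` W" for a b
    using that by (auto simp flip: matrix_vector_right_distrib)
  moreover have "q > 0" using prime_power_gt_1[OF assms(1)] by simp
  then have "proj_image M (trace_set q h) = proj_set ((*v) M ` W)"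
    unfolding W_def trace_set_eq_proj_set[OF \<open>q > 0\<close>] using proj_image_proj_set[OF assms(3)] by blast
  ultimately show ?thesis
    using no_2_secants_proj_set by metis
qed

lemma trace_set_subset:
  fixes q h :: nat
  assumes "prime_power q" and "CARD('a::{finite,field}) = q ^ h"
  shows "trace_set q h \<subseteq>
    range (\<lambda>x::'a. proj_pt (vector [x, trace_rel q h x, 1])) \<union>
    (\<lambda>z. proj_pt (vector [z, 1, 0])) ` {z. trace_rel q h z = 1} \<union>
    {proj_pt (vector [1, 0, 0])}"
    (is "_ \<subseteq> ?A \<union> ?B \<union> ?C")
proof
  fix P assume "P \<in> (trace_set q h :: ('a ^ 3) set set)"
  then obtain x y :: 'a where xy: "y \<in> subfield_q q" "(x, y) \<noteq> (0, 0)"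
    and P: "P = proj_pt (vector [x, trace_rel q h x, y])"
    unfolding trace_set_def by blast
  consider "y \<noteq> 0" | "y = 0" "trace_rel q h x \<noteq> 0" | "y = 0" "trace_rel q h x = 0"
    by blast
  then show "P \<in> ?A \<union> ?B \<union> ?C"
  proof cases
    case 1
    have "(vector [x, trace_rel q h x, y] :: 'a ^ 3) = y *s vector [x / y, trace_rel q h (x / y), 1]"
      using 1 by (simp add: trace_rel_divide_subfield[OF xy(1)] vec_eq_iff forall_3)
    then have "P = proj_pt (vector [x / y, trace_rel q h (x / y), 1])"
      using 1 by (simp add: P proj_pt_smult)
    then show ?thesis by blast
  next
    case 2
    define c where "c = trace_rel q h x"
    have "trace_rel q h (x / c) = 1"
      using 2 trace_rel_divide_subfield[OF trace_rel_in_subfield[OF assms]] by (simp add: c_def)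
    moreover have "(vector [x, trace_rel q h x, y] :: 'a ^ 3) = c *s vector [x / c, 1, 0]"
      using 2 by (simp add: c_def vec_eq_iff forall_3)
    then have "P = proj_pt (vector [x / c, 1, 0])"
      using 2 by (simp add: P c_def proj_pt_smult)
    ultimately show ?thesis by blast
  next
    case 3
    with xy(2) have "x \<noteq> 0" by simp
    have "(vector [x, trace_rel q h x, y] :: 'a ^ 3) = x *s vector [1, 0, 0]"
      using 3 by (simp add: vec_eq_iff forall_3)
    then have "P = proj_pt (vector [1, 0, 0])"
      using \<open>x \<noteq> 0\<close> by (simp add: P proj_pt_smult)
    then show ?thesis by blast
  qed
qed

lemma card_trace_set_le:
  fixes q h :: nat
  assumes "prime_power q" and "CARD('a::{finite,field}) = q ^ h"
  shows "card (trace_set q h :: ('a ^ 3) set set) \<le> q ^ h + q ^ (h - 1) + 1"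
proof -
  let ?A = "range (\<lambda>x::'a. proj_pt (vector [x, trace_rel q h x, 1]))"
  let ?B = "(\<lambda>z::'a. proj_pt (vector [z, 1, 0])) ` {z. trace_rel q h z = 1}"
  let ?C = "{proj_pt (vector [1, 0, 0]) :: ('a ^ 3) set}"
  have "card {0, 1 :: 'a} \<le> CARD('a)" by (rule card_mono) simp_all
  then have "h \<ge> 1" using assms(2) by (cases h) auto
  have "card (trace_set q h :: ('a ^ 3) set set) \<le> card (?A \<union> ?B \<union> ?C)"
    using trace_set_subset[OF assms] by (intro card_mono) simp_all
  also have "\<dots> \<le> card ?A + card ?B + card ?C"
    by (meson add_le_mono card_Un_le order_trans le_refl)
  also have "\<dots> \<le> q ^ h + q ^ (h - 1) + 1"
  proof (intro add_le_mono)
    show "card ?A \<le> q ^ h" using card_image_le[of "UNIV :: 'a set"] assms(2) by simp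
    have "card ?B \<le> card {z::'a. trace_rel q h z = 1}" by (rule card_image_le) simp
    also have "\<dots> \<le> q ^ (h - 1)"
      by (rule card_trace_rel_eq_le[OF prime_power_gt_1[OF assms(1)] \<open>h \<ge> 1\<close>])
    finally show "card ?B \<le> q ^ (h - 1)" .
  qed simp
  finally show ?thesis .
qed

section \<open>Multiple blocking sets\<close>

lemma card_Un_Int_disjoint:
  assumes "finite A" and "finite B" and "A \<inter> B = {}"
  shows "card ((A \<union> B) \<inter> l) = card (A \<inter> l) + card (B \<inter> l)"
  unfolding Int_Un_distrib2 using assms by (intro card_Un_disjoint) auto

lemma t_fold_blocking_Un:
  fixes A B :: "('a::{finite,field} ^ 3) set set"
  assumes "t_fold_blocking s A" and "t_fold_blocking t B" and "A \<inter> B = {}"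
  shows "t_fold_blocking (s + t) (A \<union> B)"
  using assms by (auto simp: t_fold_blocking_def card_Un_Int_disjoint intro: add_mono)

lemma minimal_t_fold_blockingI:
  fixes B :: "('a::field ^ 3) set set"
  assumes "finite B" and "t_fold_blocking t B"
    and t_secant: "\<And>P. P \<in> B \<Longrightarrow> \<exists>l\<in>PG2_lines. P \<in> l \<and> card (B \<inter> l) = t"
  shows "minimal_t_fold_blocking t B"
  unfolding minimal_t_fold_blocking_def
proof (intro conjI allI impI notI)
  fix B' assume "B' \<subset> B" and "t_fold_blocking t B'"
  then obtain P where P: "P \<in> B" "P \<notin> B'" by blast
  then obtain l where l: "l \<in> PG2_lines" "P \<in> l" "card (B \<inter> l) = t" using t_secant by blast
  have "card (B' \<inter> l) < card (B \<inter> l)"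
    using \<open>B' \<subset> B\<close> P l(2) assms(1) by (intro psubset_card_mono) auto
  moreover have "t \<le> card (B' \<inter> l)"
    using \<open>t_fold_blocking t B'\<close> l(1) by (simp add: t_fold_blocking_def)
  ultimately show False using l(3) by simp
qed (fact assms(2))

lemma exists_0_1_1_of_sum_less:
  fixes a b c :: "'t::finite \<Rightarrow> nat"
  assumes "\<And>t. a t \<noteq> 1" and "\<And>t. b t \<noteq> 0 \<and> b t \<noteq> 2" and "\<And>t. c t \<noteq> 0 \<and> c t \<noteq> 2"
    and "(\<Sum>t\<in>UNIV. a t) + (\<Sum>t\<in>UNIV. b t) + (\<Sum>t\<in>UNIV. c t) < 4 * CARD('t)"
  shows "\<exists>t. a t = 0 \<and> b t = 1 \<and> c t = 1"
proof (rule ccontr)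
  assume none: "\<nexists>t. a t = 0 \<and> b t = 1 \<and> c t = 1"
  have four: "4 \<le> a t + b t + c t" for t
  proof -
    have "\<not> (a t = 0 \<and> b t = 1 \<and> c t = 1)" using none by blast
    then show ?thesis using assms(1-3)[of t] by presburger
  qed
  have "(\<Sum>t\<in>(UNIV :: 't set). 4) \<le> (\<Sum>t\<in>UNIV. a t + b t + c t)"
    by (rule sum_mono) (rule four)
  with assms(4) show False by (simp add: sum.distrib)
qed

lemma three_secant_through_point:
  fixes L1 L2 L3 :: "('a::{finite,field} ^ 3) set set"
  assumes blocking: "blocking_set L1" "blocking_set L2" "blocking_set L3"
    and no_2: "no_2_secants L1" "no_2_secants L2" "no_2_secants L3"
    and disjoint: "L1 \<inter> L2 = {}" "L1 \<inter> L3 = {}" "L2 \<inter> L3 = {}"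
    and size: "card L1 + card L2 + card L3 \<le> 4 * CARD('a) + 4"
    and "P \<in> L1"
  shows "\<exists>l\<in>PG2_lines. P \<in> l \<and> card ((L1 \<union> L2 \<union> L3) \<inter> l) = 3"
proof -
  have points: "L1 \<subseteq> PG2_points" "L2 \<subseteq> PG2_points" "L3 \<subseteq> PG2_points"
    using blocking by (simp_all add: blocking_set_def t_fold_blocking_def)
  obtain l :: "'a option \<Rightarrow> ('a ^ 3) set set"
    where l: "\<And>t. l t \<in> PG2_lines" "\<And>t. P \<in> l t"
      and partition: "\<And>Q. Q \<in> PG2_points \<Longrightarrow> Q \<noteq> P \<Longrightarrow> \<exists>!t. Q \<in> l t"
    using pencil_through_point[OF subsetD[OF points(1) \<open>P \<in> L1\<close>]] by metis
  have sum_pencil: "card (L - {P}) = (\<Sum>t\<in>UNIV. card (L \<inter> l t - {P}))"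
    if "L \<subseteq> PG2_points" for L
  proof (rule card_Diff_singleton_eq_sum_partition)
    fix Q assume "Q \<in> L" "Q \<noteq> P"
    with that show "\<exists>!t. Q \<in> l t" by (intro partition) auto
  qed simp
  have line_counts: "card (L \<inter> l t) \<noteq> 0 \<and> card (L \<inter> l t) \<noteq> 2"
    if "blocking_set L" "no_2_secants L" for L t
    using that l(1)[of t] by (auto simp: blocking_set_def t_fold_blocking_def no_2_secants_def)
  define a where "a t = card (L1 \<inter> l t - {P})" for t
  define b where "b t = card (L2 \<inter> l t)" for t
  define c where "c t = card (L3 \<inter> l t)" for t
  have "a t \<noteq> 1" for t
    using line_counts[OF blocking(1) no_2(1), of t] \<open>P \<in> L1\<close> l(2)[of t] by (simp add: a_def) arith
  moreover have "b t \<noteq> 0 \<and> b t \<noteq> 2" "c t \<noteq> 0 \<and> c t \<noteq> 2" for t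
    using line_counts blocking no_2 by (simp_all add: b_def c_def)
  moreover have "P \<notin> L2" "P \<notin> L3" using \<open>P \<in> L1\<close> disjoint by blast+
  then have "(\<Sum>t\<in>UNIV. a t) = card L1 - 1" "(\<Sum>t\<in>UNIV. b t) = card L2"
    "(\<Sum>t\<in>UNIV. c t) = card L3"
    using sum_pencil[OF points(1)] sum_pencil[OF points(2)] sum_pencil[OF points(3)] \<open>P \<in> L1\<close>
    by (simp_all add: a_def b_def c_def)
  moreover have "card L1 \<ge> 1" using \<open>P \<in> L1\<close> by (auto simp: Suc_le_eq card_gt_0_iff)
  ultimately obtain t where "a t = 0" "b t = 1" "c t = 1"
    using exists_0_1_1_of_sum_less[of a b c] size by (fastforce simp: card_option)
  then have "L1 \<inter> l t - {P} = {}" by (simp add: a_def)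
  then have "L1 \<inter> l t = {P}"
    using \<open>P \<in> L1\<close> l(2)[of t] by blast
  have "(L1 \<union> L2) \<inter> L3 = {}" using disjoint by blast
  then have "card ((L1 \<union> L2 \<union> L3) \<inter> l t) = card (L1 \<inter> l t) + card (L2 \<inter> l t) + card (L3 \<inter> l t)"
    using disjoint(1) by (simp add: card_Un_Int_disjoint)
  then have "card ((L1 \<union> L2 \<union> L3) \<inter> l t) = 3"
    using \<open>L1 \<inter> l t = {P}\<close> \<open>b t = 1\<close> \<open>c t = 1\<close> by (simp add: b_def c_def)
  then show ?thesis using l by blast
qed

lemma proj_equivalent_trace_setD:
  fixes L :: "('a::{finite,field} ^ 3) set set"
  assumes "prime_power q" and "CARD('a) = q ^ h" and "proj_equivalent (trace_set q h) L"
  shows "no_2_secants L" and "card L \<le> q ^ h + q ^ (h - 1) + 1"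
proof -
  obtain M where M: "invertible M" "L = proj_image M (trace_set q h)"
    using assms(3) unfolding proj_equivalent_def by blast
  then show "no_2_secants L"
    using no_2_secants_proj_image_trace_set[OF assms(1,2)] by blast
  have "card L \<le> card (trace_set q h :: ('a ^ 3) set set)"
    unfolding M(2) by (rule card_proj_image_le) simp
  then show "card L \<le> q ^ h + q ^ (h - 1) + 1"
    using card_trace_set_le[OF assms(1,2)] by linarith
qed

theorem proposition2p12:
  fixes q h :: nat
    and L1 L2 L3 :: "('a::{finite,field} ^ 3) set set"
  assumes "prime_power q" and "q > 2" and "h \<ge> 2"
    and "CARD('a) = q ^ h"
    and "blocking_set L1" and "blocking_set L2" and "blocking_set L3"
    and "L1 \<inter> L2 = {}" and "L1 \<inter> L3 = {}" and "L2 \<inter> L3 = {}"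
    and "proj_equivalent (trace_set q h) L1"
    and "proj_equivalent (trace_set q h) L2"
    and "proj_equivalent (trace_set q h) L3"
  shows "minimal_t_fold_blocking 3 (L1 \<union> L2 \<union> L3)"
proof -
  note no_2 = proj_equivalent_trace_setD(1)[OF assms(1,4)]
  note card_le = proj_equivalent_trace_setD(2)[OF assms(1,4)]
  have "3 * q ^ (h - 1) \<le> q ^ h"
    using assms(2,3) by (simp add: power_eq_if)
  then have size: "card L1 + card L2 + card L3 \<le> 4 * CARD('a) + 4"
    using card_le[OF assms(11)] card_le[OF assms(12)] card_le[OF assms(13)] assms(4) by linarith
  have "t_fold_blocking (1 + 1 + 1) (L1 \<union> L2 \<union> L3)"
    using assms(5-10) by (intro t_fold_blocking_Un) (auto simp: blocking_set_def)
  moreover have "\<exists>l\<in>PG2_lines. P \<in> l \<and> card ((L1 \<union> L2 \<union> L3) \<inter> l) = 3"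
    if "P \<in> L1 \<union> L2 \<union> L3" for P
    using that three_secant_through_point[of L1 L2 L3] three_secant_through_point[of L2 L1 L3]
      three_secant_through_point[of L3 L1 L2] assms(5-13) no_2 size
    by (auto simp: Un_ac Int_commute)
  ultimately show ?thesis
    by (intro minimal_t_fold_blockingI) (simp_all add: numeral_3_eq_3)
qed

end
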